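(* Let $u_0\in\ell^\infty_+(\mathbb{Z})$ with $\frac12\le u_0\le1$. Then for every $\varepsilon>0$ there exist a creation operator $\Psi_*$ and $N_0\in\mathbb{N}$ such that $$\Big|\Lambda(\Psi_*u_0,k,N)-\tfrac12\Big|\le\varepsilon\quad\text{for all }k\in\mathbb{Z},\ N\ge N_0.$$ Furthermore, the jump sequence $d$ of $\Psi_*$ satisfies $\|d\|_\infty<\infty$, with a bound depending only on $\varepsilon$.
   Context: $\ell^\infty_+(\mathbb{Z})$: bounded nonnegative sequences. Local averages: $\Lambda(x,k,N)=\frac1{2N+1}\sum_{l=-N}^N x(k-l)$. A creation operator is given by a strictly increasing $\Psi:\mathbb{Z}\to\mathbb{Z}$; its jump sequence records the gaps $d=\Psi(k+1)-\Psi(k)-1\in\mathbb{N}_0$ (number of inserted particles between consecutive original particles), and $\Psi_*x(\Psi(k))=x(k)$, $\Psi_*x(l)=0$ for $l\notin\Psi(\mathbb{Z})$. *)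

theory Defs
  imports Complex_Main
begin

definition local_avg :: "(int \<Rightarrow> real) \<Rightarrow> int \<Rightarrow> nat \<Rightarrow> real" where
  "local_avg x k N = (\<Sum>l = - int N .. int N. x (k - l)) / (2 * real N + 1)"

definition creation_map :: "(int \<Rightarrow> int) \<Rightarrow> bool" where
  "creation_map \<Psi> \<longleftrightarrow> strict_mono \<Psi>"

definition creation_push :: "(int \<Rightarrow> int) \<Rightarrow> (int \<Rightarrow> real) \<Rightarrow> int \<Rightarrow> real" where
  "creation_push \<Psi> x l = (if l \<in> range \<Psi> then x (the_inv \<Psi> l) else 0)"

definition jump_seq :: "(int \<Rightarrow> int) \<Rightarrow> int \<Rightarrow> nat" where
  "jump_seq \<Psi> k = nat (\<Psi> (k + 1) - \<Psi> k - 1)"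

end

theory Submission
  imports Defs
begin

text \<open>Place the original particles at the points \<open>\<Psi> k = \<lfloor>2 S k\<rfloor>\<close>, where \<open>S\<close> is the
  cumulative sum of \<open>u\<^sub>0\<close>. Since \<open>1/2 \<le> u\<^sub>0 \<le> 1\<close>, consecutive points differ by 1 or 2, so
  \<open>\<Psi>\<close> is strictly increasing with jumps at most 1. The mass of \<open>\<Psi>\<^sub>* u\<^sub>0\<close> to the left of a
  site \<open>m\<close> is \<open>S\<close> at the first index \<open>k\<close> with \<open>\<Psi> k \<ge> m\<close>, and twice this lies in
  \<open>[m, m + 2)\<close>. Hence every window of length \<open>n\<close> carries mass within 1 of \<open>n/2\<close>, and the
  local averages over \<open>2N + 1\<close> sites are within \<open>1/(2N + 1)\<close> of \<open>1/2\<close>.\<close>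

lemma sum_atLeastLessThan_telescope_int:
  fixes f F :: "int \<Rightarrow> 'a::ab_group_add"
  assumes "\<And>m. F (m + 1) = F m + f m" and "a \<le> b"
  shows "sum f {a..<b} = F b - F a"
  using \<open>a \<le> b\<close>
proof (induction b rule: int_ge_induct)
  case (step b)
  have "{a..<b + 1} = insert b {a..<b}" using step.hyps by auto
  then show ?case using step.IH assms(1)[of b] by (simp add: algebra_simps)
qed simp

lemma strict_mono_int_succI:
  fixes f :: "int \<Rightarrow> 'a::order"
  assumes "\<And>i. f i < f (i + 1)"
  shows "strict_mono f"
proof (rule strict_monoI)
  fix i j :: int
  assume "i < j"
  then have "i + 1 \<le> j" by simp
  then show "f i < f j"
    by (induction j rule: int_ge_induct) (use assms order.strict_trans in blast)+
qed

definition cumsum :: "(int \<Rightarrow> real) \<Rightarrow> int \<Rightarrow> real" where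
  "cumsum u k = (if 0 \<le> k then sum u {0..<k} else - sum u {k..<0})"

lemma cumsum_succ: "cumsum u (k + 1) = cumsum u k + u k"
proof -
  consider "0 \<le> k" | "k = -1" | "k < -1" by linarith
  then show ?thesis
  proof cases
    case 1
    then have "{0..<k + 1} = insert k {0..<k}" by auto
    with 1 show ?thesis by (simp add: cumsum_def)
  next
    case 2
    then have "{k..<0} = {k}" by auto
    with 2 show ?thesis by (simp add: cumsum_def)
  next
    case 3
    then have "{k..<0} = insert k {k + 1..<0}" by auto
    with 3 show ?thesis by (simp add: cumsum_def)
  qed
qed

definition first_index :: "(int \<Rightarrow> int) \<Rightarrow> int \<Rightarrow> int" where
  "first_index \<Psi> m = (THE k. \<Psi> (k - 1) < m \<and> m \<le> \<Psi> k)"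

context
  fixes \<Psi> :: "int \<Rightarrow> int"
  assumes mono: "strict_mono \<Psi>"
begin

lemma first_index_unique:
  assumes "\<Psi> (k - 1) < m" "m \<le> \<Psi> k" "\<Psi> (j - 1) < m" "m \<le> \<Psi> j"
  shows "k = j"
proof (rule ccontr)
  assume "k \<noteq> j"
  then have "k \<le> j - 1 \<or> j \<le> k - 1" by auto
  then show False
    using assms strict_mono_less_eq[OF mono] by (metis not_le order_trans)
qed

lemma first_index_exists: "\<exists>k. \<Psi> (k - 1) < m \<and> m \<le> \<Psi> k"
proof (induction m rule: int_induct[where k = "\<Psi> 0"])
  case base
  show ?case using strict_monoD[OF mono, of "-1" 0] by (intro exI[of _ 0]) simp
next
  case (step1 i)
  then obtain k where k: "\<Psi> (k - 1) < i" "i \<le> \<Psi> k" by blast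
  show ?case
  proof (cases "i + 1 \<le> \<Psi> k")
    case True
    with k show ?thesis by (intro exI[of _ k]) simp
  next
    case False
    with k strict_monoD[OF mono, of k "k + 1"] show ?thesis by (intro exI[of _ "k + 1"]) auto
  qed
next
  case (step2 i)
  then obtain k where k: "\<Psi> (k - 1) < i" "i \<le> \<Psi> k" by blast
  show ?case
  proof (cases "\<Psi> (k - 1) < i - 1")
    case True
    with k show ?thesis by (intro exI[of _ k]) simp
  next
    case False
    with k strict_monoD[OF mono, of "k - 2" "k - 1"] show ?thesis
      by (intro exI[of _ "k - 1"]) auto
  qed
qed

lemma first_index: "\<Psi> (first_index \<Psi> m - 1) < m" "m \<le> \<Psi> (first_index \<Psi> m)"
  using theI'[of "\<lambda>k. \<Psi> (k - 1) < m \<and> m \<le> \<Psi> k"] first_index_exists first_index_unique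
  unfolding first_index_def by blast+

lemma first_index_eqI: "\<Psi> (k - 1) < m \<Longrightarrow> m \<le> \<Psi> k \<Longrightarrow> first_index \<Psi> m = k"
  using first_index first_index_unique by blast

lemma cumsum_first_index_succ:
  "cumsum x (first_index \<Psi> (m + 1)) = cumsum x (first_index \<Psi> m) + creation_push \<Psi> x m"
proof -
  define k where "k = first_index \<Psi> m"
  have k: "\<Psi> (k - 1) < m" "m \<le> \<Psi> k" using first_index k_def by auto
  show ?thesis
  proof (cases "\<Psi> k = m")
    case True
    have "the_inv \<Psi> m = k"
      using True the_inv_f_f[OF strict_mono_imp_inj_on[OF mono]] by metis
    then have "creation_push \<Psi> x m = x k"
      using True unfolding creation_push_def by (metis rangeI)
    moreover have "first_index \<Psi> (m + 1) = k + 1"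
      using True strict_monoD[OF mono, of k "k + 1"] by (intro first_index_eqI) auto
    ultimately show ?thesis by (simp add: k_def cumsum_succ)
  next
    case False
    have "m \<notin> range \<Psi>"
    proof
      assume "m \<in> range \<Psi>"
      then obtain j where j: "\<Psi> j = m" by auto
      moreover have "\<Psi> (j - 1) < m" using j strict_monoD[OF mono, of "j - 1" j] by simp
      ultimately have "j = k" using first_index_unique k by auto
      with False j show False by simp
    qed
    then have "creation_push \<Psi> x m = 0" unfolding creation_push_def by simp
    moreover have "first_index \<Psi> (m + 1) = k" using k False by (intro first_index_eqI) auto
    ultimately show ?thesis by (simp add: k_def)
  qed
qed

lemma sum_creation_push:
  "a \<le> b \<Longrightarrow> sum (creation_push \<Psi> x) {a..<b} =
     cumsum x (first_index \<Psi> b) - cumsum x (first_index \<Psi> a)"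
  by (rule sum_atLeastLessThan_telescope_int) (rule cumsum_first_index_succ)

end

definition rounding_map :: "(int \<Rightarrow> real) \<Rightarrow> int \<Rightarrow> int" where
  "rounding_map u k = \<lfloor>2 * cumsum u k\<rfloor>"

context
  fixes u :: "int \<Rightarrow> real"
  assumes u_bounds: "\<And>k. 1/2 \<le> u k" "\<And>k. u k \<le> 1"
begin

lemma rounding_map_succ:
  "rounding_map u k < rounding_map u (k + 1)" "rounding_map u (k + 1) \<le> rounding_map u k + 2"
proof -
  have "2 * cumsum u (k + 1) = 2 * cumsum u k + 2 * u k" by (simp add: cumsum_succ)
  moreover have "1 \<le> 2 * u k" "2 * u k \<le> 2" using u_bounds[of k] by auto
  ultimately show "rounding_map u k < rounding_map u (k + 1)"
    "rounding_map u (k + 1) \<le> rounding_map u k + 2"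
    unfolding rounding_map_def by linarith+
qed

lemma strict_mono_rounding_map: "strict_mono (rounding_map u)"
  using rounding_map_succ(1) by (rule strict_mono_int_succI)

lemma jump_seq_rounding_map: "jump_seq (rounding_map u) k \<le> 1"
  using rounding_map_succ[of k] unfolding jump_seq_def by simp

lemma cumsum_first_index_rounding_map:
  fixes m :: int
  defines "k \<equiv> first_index (rounding_map u) m"
  shows "real_of_int m \<le> 2 * cumsum u k" "2 * cumsum u k < real_of_int m + 2"
proof -
  have "rounding_map u (k - 1) < m" "m \<le> rounding_map u k"
    using first_index[OF strict_mono_rounding_map] unfolding k_def by auto
  moreover have "rounding_map u k \<le> rounding_map u (k - 1) + 2"
    using rounding_map_succ(2)[of "k - 1"] by simp
  ultimately show "real_of_int m \<le> 2 * cumsum u k" "2 * cumsum u k < real_of_int m + 2"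
    unfolding rounding_map_def by linarith+
qed

lemma window_sum_rounding_map:
  "\<bar>sum (creation_push (rounding_map u) u) {a..<a + int n} - real n / 2\<bar> < 1"
  using sum_creation_push[OF strict_mono_rounding_map, of a "a + int n" u]
    cumsum_first_index_rounding_map[of a] cumsum_first_index_rounding_map[of "a + int n"]
  by (simp add: abs_less_iff)

end

lemma local_avg_eq_window:
  "local_avg x k N = sum x {k - int N..<k - int N + int (2 * N + 1)} / (2 * real N + 1)"
  unfolding local_avg_def
  by (rule arg_cong[where f = "\<lambda>s. s / _"],
      rule sum.reindex_bij_witness[where i = "\<lambda>m. k - m" and j = "\<lambda>l. k - l"]) auto

lemma local_avg_near_half:
  fixes x :: "int \<Rightarrow> real"
  assumes "\<And>a n. \<bar>sum x {a..<a + int n} - real n / 2\<bar> < 1"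
  shows "\<bar>local_avg x k N - 1/2\<bar> \<le> 1 / (2 * real N + 1)"
proof -
  define s where "s = sum x {k - int N..<k - int N + int (2 * N + 1)}"
  have pos: "0 < 2 * real N + 1" by simp
  have "local_avg x k N - 1/2 = (s - real (2 * N + 1) / 2) / (2 * real N + 1)"
    using pos by (simp add: local_avg_eq_window s_def field_simps)
  moreover have "\<bar>s - real (2 * N + 1) / 2\<bar> \<le> 1"
    using assms[of "k - int N" "2 * N + 1"] unfolding s_def by simp
  ultimately show ?thesis using pos by (simp add: divide_right_mono)
qed

theorem lemma4p2:
  shows "\<forall>\<epsilon>::real. \<epsilon> > 0 \<longrightarrow> (\<exists>B::nat. \<forall>u0 :: int \<Rightarrow> real.
           (\<forall>k. 1/2 \<le> u0 k \<and> u0 k \<le> 1) \<longrightarrow>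
           (\<exists>\<Psi> N0. creation_map \<Psi> \<and>
              (\<forall>k. \<forall>N\<ge>N0. \<bar>local_avg (creation_push \<Psi> u0) k N - 1/2\<bar> \<le> \<epsilon>) \<and>
              (\<forall>k. jump_seq \<Psi> k \<le> B)))"
proof (intro allI impI exI[of _ 1])
  fix \<epsilon> :: real and u0 :: "int \<Rightarrow> real"
  assume "\<epsilon> > 0" and u0: "\<forall>k. 1/2 \<le> u0 k \<and> u0 k \<le> 1"
  obtain N0 :: nat where N0: "1 / \<epsilon> < real N0" using reals_Archimedean2 by blast
  have "\<bar>local_avg (creation_push (rounding_map u0) u0) k N - 1/2\<bar> \<le> \<epsilon>"
    if "N \<ge> N0" for k N
  proof -
    have "\<bar>local_avg (creation_push (rounding_map u0) u0) k N - 1/2\<bar> \<le> 1 / (2 * real N + 1)"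
      using u0 by (intro local_avg_near_half window_sum_rounding_map) auto
    also have "\<dots> \<le> \<epsilon>"
    proof -
      have "1 < \<epsilon> * real N0" using N0 \<open>\<epsilon> > 0\<close> by (simp add: field_simps)
      also have "\<dots> \<le> \<epsilon> * (2 * real N + 1)" using that \<open>\<epsilon> > 0\<close> by simp
      finally show ?thesis by (simp add: field_simps)
    qed
    finally show ?thesis .
  qed
  moreover have "creation_map (rounding_map u0)" "\<And>k. jump_seq (rounding_map u0) k \<le> 1"
    using u0 strict_mono_rounding_map jump_seq_rounding_map unfolding creation_map_def by auto
  ultimately show "\<exists>\<Psi> N0. creation_map \<Psi> \<and>
      (\<forall>k. \<forall>N\<ge>N0. \<bar>local_avg (creation_push \<Psi> u0) k N - 1/2\<bar> \<le> \<epsilon>) \<and>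
      (\<forall>k. jump_seq \<Psi> k \<le> 1)"
    by blast
qed

end
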